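(* There is an absolute constant $C>0$ such that for every power $q$ of an odd prime, every $d\ge 2$, and every $A\subset\mathbb{F}_q^d$ with $|A|\ge C q^{\frac{d+2}{3}}$, there exist $x,y,z\in A$ such that $(x,y,z)$ forms a right angle.
   Context: For $u,v\in\mathbb{F}_q^d$, $u\cdot v=\sum_{i=1}^d u_iv_i$. An ordered triple $(x,y,z)\in(\mathbb{F}_q^d)^3$ forms a right angle if $x,y,z$ are pairwise distinct and $(x-y)\cdot(z-y)=0$. *)

theory Defs
  imports Complex_Main "HOL-Algebra.Ring" "HOL-Library.FuncSet" "HOL-Computational_Algebra.Primes"
begin

definition vecs :: "('a, 'b) ring_scheme \<Rightarrow> nat \<Rightarrow> (nat \<Rightarrow> 'a) set" where
  "vecs R d = ({0..<d} \<rightarrow>\<^sub>E carrier R)"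

definition vdiff :: "('a, 'b) ring_scheme \<Rightarrow> nat \<Rightarrow> (nat \<Rightarrow> 'a) \<Rightarrow> (nat \<Rightarrow> 'a) \<Rightarrow> (nat \<Rightarrow> 'a)" where
  "vdiff R d u v = (\<lambda>i\<in>{0..<d}. u i \<ominus>\<^bsub>R\<^esub> v i)"

definition vdot :: "('a, 'b) ring_scheme \<Rightarrow> nat \<Rightarrow> (nat \<Rightarrow> 'a) \<Rightarrow> (nat \<Rightarrow> 'a) \<Rightarrow> 'a" where
  "vdot R d u v = (\<Oplus>\<^bsub>R\<^esub> i\<in>{0..<d}. u i \<otimes>\<^bsub>R\<^esub> v i)"

definition right_angle :: "('a, 'b) ring_scheme \<Rightarrow> nat \<Rightarrow> (nat \<Rightarrow> 'a) \<Rightarrow> (nat \<Rightarrow> 'a) \<Rightarrow> (nat \<Rightarrow> 'a) \<Rightarrow> bool" where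
  "right_angle R d x y z \<longleftrightarrow> x \<noteq> y \<and> y \<noteq> z \<and> x \<noteq> z \<and>
     vdot R d (vdiff R d x y) (vdiff R d z y) = \<zero>\<^bsub>R\<^esub>"

end

theory Submission
  imports Defs "HOL-Analysis.Convex"
begin

text \<open>
  Count the triples \<open>T = {(x, y, z) \<in> A\<^sup>3. (x - y) \<cdot> (z - y) = 0}\<close>. For fixed \<open>x, y\<close> the
  admissible \<open>z\<close> are the points of \<open>A\<close> on the hyperplane \<open>H\<close> through \<open>y\<close> with normal \<open>x - y\<close>
  (all of \<open>F\<^sub>q\<^sup>d\<close> if \<open>x = y\<close>), which has at least \<open>q\<^sup>d\<^sup>-\<^sup>1\<close> points. Writing
  \<open>|A \<inter> H| = \<alpha> |H| + D(H)\<close> with \<open>\<alpha> = |A| / q\<^sup>d\<close>, the main terms contribute at least \<open>|A|\<^sup>3 / q\<close>.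
  The discrepancies are handled by Cauchy-Schwarz: the multiplicities with which the hyperplanes
  occur have square sum at most \<open>T\<close>, because two pairs giving the same hyperplane form an orthogonal
  triple, and the second moment of \<open>D\<close> over all (normal, offset) pairs is at most \<open>q\<^sup>d |A|\<close>.
  Hence \<open>|A|\<^sup>3 / q \<le> T + sqrt (T q\<^sup>d |A|)\<close>. Without right angles only the at most \<open>3 |A|\<^sup>2\<close>
  degenerate triples remain, which is impossible once \<open>|A| \<ge> 7 q\<^bsup>(d+2)/3\<^esup>\<close>. The argument works
  over every finite field.
\<close>

section \<open>Vectors over a commutative ring\<close>

lemma finite_vecs: "finite (carrier R) \<Longrightarrow> finite (vecs R d)"
  unfolding vecs_def by (intro finite_PiE) auto

lemma card_vecs: "finite (carrier R) \<Longrightarrow> card (vecs R d) = card (carrier R) ^ d"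
  unfolding vecs_def by (simp add: card_PiE)

lemma vecs_carrier: "x \<in> vecs R d \<Longrightarrow> i < d \<Longrightarrow> x i \<in> carrier R"
  unfolding vecs_def by auto

lemma vecs_fun_upd: "x \<in> vecs R d \<Longrightarrow> i < d \<Longrightarrow> a \<in> carrier R \<Longrightarrow> x(i := a) \<in> vecs R d"
  unfolding vecs_def by (auto simp: PiE_iff extensional_def)

lemma vecs_eqI: "x \<in> vecs R d \<Longrightarrow> y \<in> vecs R d \<Longrightarrow> (\<And>i. i < d \<Longrightarrow> x i = y i) \<Longrightarrow> x = y"
  unfolding vecs_def by (rule PiE_ext) auto

context cring
begin

lemma vdiff_closed: "x \<in> vecs R d \<Longrightarrow> y \<in> vecs R d \<Longrightarrow> vdiff R d x y \<in> vecs R d"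
  unfolding vdiff_def vecs_def by (auto simp: PiE_def Pi_def)

lemma vdot_closed: "u \<in> vecs R d \<Longrightarrow> v \<in> vecs R d \<Longrightarrow> vdot R d u v \<in> carrier R"
  unfolding vdot_def by (intro finsum_closed) (auto simp: vecs_carrier)

lemma vdot_commute: "u \<in> vecs R d \<Longrightarrow> v \<in> vecs R d \<Longrightarrow> vdot R d u v = vdot R d v u"
  unfolding vdot_def by (intro finsum_cong) (auto simp: m_comm vecs_carrier)

lemma vdot_eq_vdot_vdiff_add:
  assumes u: "u \<in> vecs R d" and z: "z \<in> vecs R d" and y: "y \<in> vecs R d"
  shows "vdot R d u z = vdot R d u (vdiff R d z y) \<oplus> vdot R d u y"
proof -
  have distrib_diff: "a \<otimes> b = a \<otimes> (b \<ominus> c) \<oplus> a \<otimes> c"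
    if "a \<in> carrier R" "b \<in> carrier R" "c \<in> carrier R" for a b c
    using that by algebra
  have "vdot R d u z = (\<Oplus>i\<in>{0..<d}. u i \<otimes> (z i \<ominus> y i) \<oplus> u i \<otimes> y i)"
    unfolding vdot_def
    by (intro finsum_cong) (auto simp: vecs_carrier[OF u] vecs_carrier[OF z] vecs_carrier[OF y] distrib_diff)
  also have "\<dots> = vdot R d u (vdiff R d z y) \<oplus> vdot R d u y"
    unfolding vdot_def vdiff_def
    by (simp add: finsum_addf vecs_carrier[OF u] vecs_carrier[OF z] vecs_carrier[OF y] Pi_def
        cong: finsum_cong)
  finally show ?thesis .
qed

lemma vdot_vdiff_eq_zero_iff:
  assumes "u \<in> vecs R d" "z \<in> vecs R d" "y \<in> vecs R d"
  shows "vdot R d u (vdiff R d z y) = \<zero> \<longleftrightarrow> vdot R d u z = vdot R d u y"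
  using vdot_eq_vdot_vdiff_add[OF assms] assms
  by (simp add: vdot_closed vdiff_closed)

lemma vdiff_cancel_right:
  assumes "x \<in> vecs R d" "x' \<in> vecs R d" "y \<in> vecs R d" "vdiff R d x y = vdiff R d x' y"
  shows "x = x'"
proof (rule vecs_eqI[OF assms(1,2)])
  fix i assume i: "i < d"
  have "x i \<ominus> y i = x' i \<ominus> y i"
    using fun_cong[OF assms(4), of i] i by (simp add: vdiff_def)
  then show "x i = x' i"
    using assms(1-3) i by (simp add: minus_eq add.right_cancel vecs_carrier)
qed

lemma vdiff_nonzero:
  assumes "x \<in> vecs R d" "y \<in> vecs R d" "x \<noteq> y"
  obtains i where "i < d" "vdiff R d x y i \<noteq> \<zero>"
proof -
  obtain i where i: "i < d" "x i \<noteq> y i"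
    using vecs_eqI[OF assms(1,2)] assms(3) by blast
  have "x i \<ominus> y i \<noteq> y i \<ominus> y i"
    using i vecs_carrier[OF assms(1)] vecs_carrier[OF assms(2)] by (simp add: minus_eq add.right_cancel)
  then show thesis
    using that[OF i(1)] i(1) vecs_carrier[OF assms(2)] by (simp add: vdiff_def r_neg minus_eq)
qed

end

section \<open>Level sets of the dot product\<close>

definition level_set :: "('a, 'b) ring_scheme \<Rightarrow> nat \<Rightarrow> (nat \<Rightarrow> 'a) \<times> 'a \<Rightarrow> (nat \<Rightarrow> 'a) set"
  where "level_set R d = (\<lambda>(v, c). {z \<in> vecs R d. vdot R d v z = c})"

text \<open>The hyperplane through \<open>y\<close> with normal \<open>x - y\<close>, as a pair (normal, offset) indexing
  \<open>level_set\<close>; for \<open>x = y\<close> it is the whole space.\<close>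
definition perp_plane :: "('a, 'b) ring_scheme \<Rightarrow> nat \<Rightarrow> (nat \<Rightarrow> 'a) \<times> (nat \<Rightarrow> 'a) \<Rightarrow> (nat \<Rightarrow> 'a) \<times> 'a"
  where "perp_plane R d = (\<lambda>(x, y). (vdiff R d x y, vdot R d (vdiff R d x y) y))"

lemma level_set_subset_vecs: "level_set R d k \<subseteq> vecs R d"
  unfolding level_set_def by auto

context cring
begin

lemma vdot_add_basis:
  assumes v: "v \<in> vecs R d" and z: "z \<in> vecs R d" and t: "t \<in> carrier R" and i: "i < d"
  shows "vdot R d v (z(i := z i \<oplus> t)) = vdot R d v z \<oplus> v i \<otimes> t"
proof -
  have "v j \<otimes> (z(i := z i \<oplus> t)) j = v j \<otimes> z j \<oplus> (if i = j then v j \<otimes> t else \<zero>)"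
    if "j < d" for j
    using that t by (auto simp: vecs_carrier[OF v] vecs_carrier[OF z] r_distr)
  then have "vdot R d v (z(i := z i \<oplus> t))
      = (\<Oplus>j\<in>{0..<d}. v j \<otimes> z j \<oplus> (if i = j then v j \<otimes> t else \<zero>))"
    unfolding vdot_def by (intro finsum_cong) (auto simp: vecs_carrier[OF v] vecs_carrier[OF z] t)
  also have "\<dots> = vdot R d v z \<oplus> v i \<otimes> t"
    unfolding vdot_def using i t
    by (simp add: finsum_singleton vecs_carrier[OF v] vecs_carrier[OF z] Pi_def)
  finally show ?thesis .
qed

end

context field
begin

text \<open>Translating along the \<open>i\<close>-th axis maps each level set of \<open>v\<close> injectively into any other.\<close>
lemma card_level_set_le:
  assumes fin: "finite (carrier R)" and v: "v \<in> vecs R d" and i: "i < d" "v i \<noteq> \<zero>"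
    and c: "c \<in> carrier R" "c' \<in> carrier R"
  shows "card (level_set R d (v, c)) \<le> card (level_set R d (v, c'))"
proof -
  have vi: "v i \<in> Units R"
    using i vecs_carrier[OF v] by (simp add: field_Units)
  define t where "t = inv (v i) \<otimes> (c' \<ominus> c)"
  have t: "t \<in> carrier R" and "v i \<otimes> t = c' \<ominus> c"
    unfolding t_def using vi c
    by (simp, metis Units_closed Units_inv_closed Units_r_inv l_one m_assoc minus_closed)
  then have vt: "c \<oplus> v i \<otimes> t = c'"
    using c by simp algebra
  let ?shift = "\<lambda>z. z(i := z i \<oplus> t)"
  have "inj_on ?shift (level_set R d (v, c))"
  proof (rule inj_onI)
    fix z z' assume z: "z \<in> level_set R d (v, c)" and z': "z' \<in> level_set R d (v, c)"
      and eq: "?shift z = ?shift z'"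
    have "z i \<in> carrier R" "z' i \<in> carrier R"
      using z z' i by (auto simp: level_set_def vecs_carrier)
    then have "z i = z' i"
      using fun_cong[OF eq, of i] t by (simp add: add.right_cancel)
    then show "z = z'"
      using eq by (metis fun_upd_triv fun_upd_upd)
  qed
  moreover have "?shift ` level_set R d (v, c) \<subseteq> level_set R d (v, c')"
    using i t vt by (auto simp: level_set_def vdot_add_basis[OF v] vecs_fun_upd vecs_carrier)
  moreover have "finite (level_set R d (v, c'))"
    using finite_subset[OF level_set_subset_vecs finite_vecs[OF fin]] .
  ultimately show ?thesis
    by (rule card_inj_on_le)
qed

lemma card_level_set:
  assumes fin: "finite (carrier R)" and v: "v \<in> vecs R d" and i: "i < d" "v i \<noteq> \<zero>"
    and c: "c \<in> carrier R"
  shows "card (level_set R d (v, c)) = card (carrier R) ^ (d - 1)"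
proof -
  let ?q = "card (carrier R)"
  have same: "card (level_set R d (v, c')) = card (level_set R d (v, c))" if "c' \<in> carrier R" for c'
    using card_level_set_le[OF fin v i that c] card_level_set_le[OF fin v i c that] by simp
  have "vdot R d v ` vecs R d \<subseteq> carrier R"
    using vdot_closed[OF v] by blast
  then have "?q ^ d = (\<Sum>c'\<in>carrier R. card (level_set R d (v, c')))"
    using sum.group[OF finite_vecs[OF fin, of d] fin, where h = "\<lambda>_. 1::nat"]
    by (simp add: card_vecs[OF fin, symmetric] level_set_def)
  also have "\<dots> = ?q * card (level_set R d (v, c))"
    using same by simp
  finally have "?q * ?q ^ (d - 1) = ?q * card (level_set R d (v, c))"
    using i by (simp flip: power_Suc)
  moreover have "?q > 0"
    using fin by (auto simp: card_gt_0_iff)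
  ultimately show ?thesis
    by simp
qed

lemma card_level_set_perp_plane_ge:
  assumes fin: "finite (carrier R)" and x: "x \<in> vecs R d" and y: "y \<in> vecs R d"
  shows "card (carrier R) ^ (d - 1) \<le> card (level_set R d (perp_plane R d (x, y)))"
proof (cases "x = y")
  case True
  have "vdot R d (vdiff R d y y) z = (\<Oplus>i\<in>{0..<d}. \<zero>)" if "z \<in> vecs R d" for z
    unfolding vdot_def vdiff_def using y that by (intro finsum_cong) (auto simp: vecs_carrier minus_eq r_neg)
  then have "level_set R d (perp_plane R d (x, y)) = vecs R d"
    using True y by (auto simp: level_set_def perp_plane_def)
  moreover have "card (carrier R) ^ (d - 1) \<le> card (carrier R) ^ d"
    using fin by (intro power_increasing) (auto simp: Suc_le_eq card_gt_0_iff)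
  ultimately show ?thesis
    by (simp add: card_vecs[OF fin])
next
  case False
  then obtain i where "i < d" "vdiff R d x y i \<noteq> \<zero>"
    using vdiff_nonzero[OF x y] by blast
  then show ?thesis
    using card_level_set[OF fin vdiff_closed[OF x y]] vdot_closed[OF vdiff_closed[OF x y] y]
    by (simp add: perp_plane_def)
qed

lemma card_vdot_eq:
  assumes fin: "finite (carrier R)" and z: "z \<in> vecs R d" and z': "z' \<in> vecs R d"
  shows "card {v \<in> vecs R d. vdot R d v z = vdot R d v z'}
    = (if z = z' then card (carrier R) ^ d else card (carrier R) ^ (d - 1))"
proof (cases "z = z'")
  case False
  then obtain i where i: "i < d" "vdiff R d z z' i \<noteq> \<zero>"
    using vdiff_nonzero[OF z z'] by blast
  have "{v \<in> vecs R d. vdot R d v z = vdot R d v z'} = level_set R d (vdiff R d z z', \<zero>)"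
    using vdot_vdiff_eq_zero_iff[OF _ z z'] vdot_commute[OF _ vdiff_closed[OF z z']]
    by (auto simp: level_set_def)
  then show ?thesis
    using False card_level_set[OF fin vdiff_closed[OF z z'] i] by simp
qed (simp add: card_vecs[OF fin])

lemma sum_level_set_squared:
  fixes g :: "(nat \<Rightarrow> 'a) \<Rightarrow> real"
  assumes v: "v \<in> vecs R d" and fin: "finite (carrier R)"
  shows "(\<Sum>c\<in>carrier R. (sum g (level_set R d (v, c)))\<^sup>2)
    = (\<Sum>z\<in>vecs R d. \<Sum>z'\<in>vecs R d. g z * g z' * of_bool (vdot R d v z = vdot R d v z'))"
proof -
  let ?V = "vecs R d" and ?L = "\<lambda>c. level_set R d (v, c)"
  have finV: "finite ?V"
    using finite_vecs[OF fin] .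
  have "(\<Sum>z'\<in>?V. g z * g z' * of_bool (vdot R d v z = vdot R d v z')) = g z * sum g (?L (vdot R d v z))"
    for z
  proof -
    have "?V \<inter> {z'. vdot R d v z = vdot R d v z'} = ?L (vdot R d v z)"
      by (auto simp: level_set_def)
    then show ?thesis
      using finV by (simp add: mult.assoc flip: sum_distrib_left)
  qed
  then have "(\<Sum>z\<in>?V. \<Sum>z'\<in>?V. g z * g z' * of_bool (vdot R d v z = vdot R d v z'))
      = (\<Sum>z\<in>?V. g z * sum g (?L (vdot R d v z)))"
    by simp
  also have "\<dots> = (\<Sum>c\<in>carrier R. \<Sum>z\<in>?L c. g z * sum g (?L c))"
    using sum.group[OF finV fin, where g = "vdot R d v" and h = "\<lambda>z. g z * sum g (?L (vdot R d v z))"]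
      vdot_closed[OF v]
    by (auto simp: level_set_def image_subset_iff intro!: sum.cong)
  also have "\<dots> = (\<Sum>c\<in>carrier R. (sum g (?L c))\<^sup>2)"
    by (simp add: sum_distrib_right power2_eq_square)
  finally show ?thesis ..
qed

text \<open>Expanding the square, a pair \<open>(z, z')\<close> is counted once for every normal \<open>v\<close> with
  \<open>v \<cdot> z = v \<cdot> z'\<close>: \<open>q\<^sup>d\<close> times if \<open>z = z'\<close> and \<open>q\<^sup>d\<^sup>-\<^sup>1\<close> times otherwise.\<close>
lemma sum_level_sets_squared:
  fixes g :: "(nat \<Rightarrow> 'a) \<Rightarrow> real"
  assumes fin: "finite (carrier R)"
  defines "q \<equiv> real (card (carrier R))"
  shows "(\<Sum>k\<in>vecs R d \<times> carrier R. (sum g (level_set R d k))\<^sup>2)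
    = q ^ (d - 1) * (sum g (vecs R d))\<^sup>2 + (q ^ d - q ^ (d - 1)) * (\<Sum>z\<in>vecs R d. (g z)\<^sup>2)"
proof -
  let ?V = "vecs R d"
  have finV: "finite ?V"
    using finite_vecs[OF fin] .
  have "(\<Sum>k\<in>?V \<times> carrier R. (sum g (level_set R d k))\<^sup>2)
      = (\<Sum>v\<in>?V. \<Sum>z\<in>?V. \<Sum>z'\<in>?V. g z * g z' * of_bool (vdot R d v z = vdot R d v z'))"
    by (simp add: sum.cartesian_product' sum_level_set_squared[OF _ fin])
  also have "\<dots> = (\<Sum>z\<in>?V. \<Sum>v\<in>?V. \<Sum>z'\<in>?V. g z * g z' * of_bool (vdot R d v z = vdot R d v z'))"
    by (rule sum.swap)
  also have "\<dots> = (\<Sum>z\<in>?V. \<Sum>z'\<in>?V. \<Sum>v\<in>?V. g z * g z' * of_bool (vdot R d v z = vdot R d v z'))"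
    by (intro sum.cong refl sum.swap)
  also have "\<dots> = (\<Sum>z\<in>?V. \<Sum>z'\<in>?V.
      q ^ (d - 1) * (g z * g z') + (q ^ d - q ^ (d - 1)) * (g z * g z' * of_bool (z = z')))"
  proof (intro sum.cong refl)
    fix z z' assume z: "z \<in> ?V" and z': "z' \<in> ?V"
    have "(\<Sum>v\<in>?V. g z * g z' * of_bool (vdot R d v z = vdot R d v z'))
        = g z * g z' * card {v \<in> ?V. vdot R d v z = vdot R d v z'}"
      using finV by (simp add: Int_def flip: sum_distrib_left)
    then show "(\<Sum>v\<in>?V. g z * g z' * of_bool (vdot R d v z = vdot R d v z'))
        = q ^ (d - 1) * (g z * g z') + (q ^ d - q ^ (d - 1)) * (g z * g z' * of_bool (z = z'))"
      using card_vdot_eq[OF fin z z'] by (simp add: q_def algebra_simps)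
  qed
  also have "\<dots> = q ^ (d - 1) * (sum g ?V)\<^sup>2 + (q ^ d - q ^ (d - 1)) * (\<Sum>z\<in>?V. (g z)\<^sup>2)"
  proof -
    have "(\<Sum>z'\<in>?V. g z * g z' * of_bool (z = z')) = (g z)\<^sup>2" if "z \<in> ?V" for z
      using finV that by (simp add: of_bool_def power2_eq_square if_distrib sum.delta cong: if_cong)
    then show ?thesis
      by (simp add: sum.distrib sum_product power2_eq_square flip: sum_distrib_left)
  qed
  finally show ?thesis .
qed

lemma sum_level_sets_centered_squared_le:
  assumes fin: "finite (carrier R)" and A: "A \<subseteq> vecs R d"
  defines "\<alpha> \<equiv> real (card A) / real (card (carrier R)) ^ d"
  shows "(\<Sum>k\<in>vecs R d \<times> carrier R. (\<Sum>z\<in>level_set R d k. of_bool (z \<in> A) - \<alpha>)\<^sup>2)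
    \<le> real (card (carrier R)) ^ d * real (card A)"
proof -
  let ?V = "vecs R d" and ?q = "real (card (carrier R))" and ?a = "real (card A)"
  define g where "g z = of_bool (z \<in> A) - \<alpha>" for z
  have finV: "finite ?V"
    using finite_vecs[OF fin] .
  have q: "?q > 0"
    using fin by (auto simp: card_gt_0_iff)
  have VA: "?V \<inter> {z. z \<in> A} = A"
    using A by blast
  have "sum g ?V = ?a - \<alpha> * ?q ^ d"
    using finV VA by (simp add: g_def sum_subtractf card_vecs[OF fin])
  then have sum_g: "sum g ?V = 0"
    using q by (simp add: \<alpha>_def)
  have "(g z)\<^sup>2 = (1 - 2 * \<alpha>) * of_bool (z \<in> A) + \<alpha>\<^sup>2" for z
    by (cases "z \<in> A") (simp_all add: g_def power2_eq_square algebra_simps)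
  then have "(\<Sum>z\<in>?V. (g z)\<^sup>2) = (1 - 2 * \<alpha>) * ?a + \<alpha>\<^sup>2 * ?q ^ d"
    using finV VA by (simp add: sum.distrib card_vecs[OF fin] flip: sum_distrib_left)
  also have "\<dots> = ?a - \<alpha> * ?a"
    using q by (simp add: \<alpha>_def power2_eq_square field_simps)
  finally have sum_g2: "(\<Sum>z\<in>?V. (g z)\<^sup>2) \<le> ?a"
    by (simp add: \<alpha>_def)
  have "(\<Sum>k\<in>?V \<times> carrier R. (sum g (level_set R d k))\<^sup>2)
      = (?q ^ d - ?q ^ (d - 1)) * (\<Sum>z\<in>?V. (g z)\<^sup>2)"
    using sum_level_sets_squared[OF fin, of g d] sum_g by simp
  also have "\<dots> \<le> ?q ^ d * ?a"
    using sum_g2 by (intro mult_mono) (auto intro: sum_nonneg)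
  finally show ?thesis
    by (simp add: g_def)
qed

end

section \<open>Orthogonal triples\<close>

lemma sum_comp_eq_sum_card_fibres:
  fixes h :: "'b \<Rightarrow> 'c::comm_semiring_1"
  assumes "finite P" "finite K" "f ` P \<subseteq> K"
  shows "(\<Sum>p\<in>P. h (f p)) = (\<Sum>k\<in>K. of_nat (card {p \<in> P. f p = k}) * h k)"
proof -
  have "(\<Sum>p\<in>P. h (f p)) = (\<Sum>k\<in>K. \<Sum>p\<in>{p \<in> P. f p = k}. h (f p))"
    using sum.group[OF assms, where h = "\<lambda>p. h (f p)"] by simp
  also have "\<dots> = (\<Sum>k\<in>K. of_nat (card {p \<in> P. f p = k}) * h k)"
    by (intro sum.cong refl) simp
  finally show ?thesis .
qed

definition orth_triples ::
    "('a, 'b) ring_scheme \<Rightarrow> nat \<Rightarrow> (nat \<Rightarrow> 'a) set \<Rightarrow> (((nat \<Rightarrow> 'a) \<times> (nat \<Rightarrow> 'a)) \<times> (nat \<Rightarrow> 'a)) set"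
  where "orth_triples R d A =
    (SIGMA (x, y):A \<times> A. {z \<in> A. vdot R d (vdiff R d x y) (vdiff R d z y) = \<zero>\<^bsub>R\<^esub>})"

lemma finite_orth_triples: "finite A \<Longrightarrow> finite (orth_triples R d A)"
  by (rule finite_subset[of _ "(A \<times> A) \<times> A"]) (auto simp: orth_triples_def)

lemma card_orth_triples_le_if_no_right_angle:
  assumes "finite A" and no_right_angle: "\<forall>x\<in>A. \<forall>y\<in>A. \<forall>z\<in>A. \<not> right_angle R d x y z"
  shows "card (orth_triples R d A) \<le> 3 * card A ^ 2"
proof -
  let ?D1 = "(\<lambda>(x, z). ((x, x), z)) ` (A \<times> A)"
    and ?D2 = "(\<lambda>(x, y). ((x, y), y)) ` (A \<times> A)"
    and ?D3 = "(\<lambda>(x, y). ((x, y), x)) ` (A \<times> A)"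
  have "orth_triples R d A \<subseteq> ?D1 \<union> ?D2 \<union> ?D3"
  proof
    fix t assume "t \<in> orth_triples R d A"
    then obtain x y z where t: "t = ((x, y), z)" "x \<in> A" "y \<in> A" "z \<in> A"
      and "vdot R d (vdiff R d x y) (vdiff R d z y) = \<zero>\<^bsub>R\<^esub>"
      unfolding orth_triples_def by blast
    then have "x = y \<or> y = z \<or> x = z"
      using no_right_angle by (auto simp: right_angle_def)
    then show "t \<in> ?D1 \<union> ?D2 \<union> ?D3"
      using t by auto
  qed
  then have "card (orth_triples R d A) \<le> card (?D1 \<union> ?D2 \<union> ?D3)"
    using \<open>finite A\<close> by (intro card_mono) auto
  also have "\<dots> \<le> card ?D1 + card ?D2 + card ?D3"
    by (intro order_trans[OF card_Un_le] add_mono card_Un_le order_refl)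
  also have "\<dots> \<le> card (A \<times> A) + card (A \<times> A) + card (A \<times> A)"
    by (intro add_mono card_image_le) (use \<open>finite A\<close> in auto)
  finally show ?thesis
    by (simp add: card_cartesian_product power2_eq_square)
qed

context cring
begin

text \<open>Two pairs with the same \<open>perp_plane\<close> give an orthogonal triple, and they can be
  recovered from it because \<open>x' = y' + (x - y)\<close>.\<close>
lemma sum_card_perp_plane_fibres_squared_le:
  assumes A: "A \<subseteq> vecs R d" "finite A" and K: "finite K"
  shows "(\<Sum>k\<in>K. card {p \<in> A \<times> A. perp_plane R d p = k} ^ 2) \<le> card (orth_triples R d A)"
proof -
  define F where "F k = {p \<in> A \<times> A. perp_plane R d p = k}" for k
  have "(\<Sum>k\<in>K. card (F k) ^ 2) = card (SIGMA k:K. F k \<times> F k)"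
    using A K by (simp add: F_def card_cartesian_product power2_eq_square)
  also have "\<dots> \<le> card (orth_triples R d A)"
  proof (rule card_inj_on_le)
    let ?h = "\<lambda>(k, p, x', y'). (p, y')"
    show "inj_on ?h (SIGMA k:K. F k \<times> F k)"
    proof (rule inj_onI)
      fix u1 u2 assume "u1 \<in> (SIGMA k:K. F k \<times> F k)" "u2 \<in> (SIGMA k:K. F k \<times> F k)"
        and "?h u1 = ?h u2"
      then obtain p x1 x2 y where u: "u1 = (perp_plane R d p, p, x1, y)" "u2 = (perp_plane R d p, p, x2, y)"
        and x: "x1 \<in> A" "x2 \<in> A" "y \<in> A"
        and "perp_plane R d (x1, y) = perp_plane R d (x2, y)"
        unfolding F_def by auto
      then have "vdiff R d x1 y = vdiff R d x2 y"
        by (simp add: perp_plane_def)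
      then have "x1 = x2"
        using vdiff_cancel_right x A(1) by blast
      then show "u1 = u2"
        using u by simp
    qed
    show "?h ` (SIGMA k:K. F k \<times> F k) \<subseteq> orth_triples R d A"
    proof
      fix t assume "t \<in> ?h ` (SIGMA k:K. F k \<times> F k)"
      then obtain x y x' y' where t: "t = ((x, y), y')" and xy: "x \<in> A" "y \<in> A" "x' \<in> A" "y' \<in> A"
        and "perp_plane R d (x, y) = perp_plane R d (x', y')"
        unfolding F_def by auto
      then have "vdot R d (vdiff R d x y) y' = vdot R d (vdiff R d x y) y"
        by (simp add: perp_plane_def) metis
      then have "vdot R d (vdiff R d x y) (vdiff R d y' y) = \<zero>"
        using xy A(1) by (subst vdot_vdiff_eq_zero_iff) (auto intro: vdiff_closed)
      then show "t \<in> orth_triples R d A"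
        using t xy by (simp add: orth_triples_def)
    qed
    show "finite (orth_triples R d A)"
      using finite_orth_triples[OF A(2)] .
  qed
  finally show ?thesis
    by (simp add: F_def)
qed

lemma card_orth_triples:
  assumes A: "A \<subseteq> vecs R d" "finite A"
  shows "card (orth_triples R d A) = (\<Sum>p\<in>A \<times> A. card (A \<inter> level_set R d (perp_plane R d p)))"
proof -
  have "{z \<in> A. vdot R d (vdiff R d x y) (vdiff R d z y) = \<zero>} = A \<inter> level_set R d (perp_plane R d (x, y))"
    if "x \<in> A" "y \<in> A" for x y
  proof -
    have xy: "x \<in> vecs R d" "y \<in> vecs R d"
      using that A(1) by auto
    show ?thesis
      using A(1) vdot_vdiff_eq_zero_iff[OF vdiff_closed[OF xy] _ xy(2)]
      by (auto simp: level_set_def perp_plane_def)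
  qed
  then show ?thesis
    unfolding orth_triples_def using A(2) by (subst card_SigmaI) (auto intro!: sum.cong)
qed

end

context field
begin

lemma sum_perp_plane_discrepancies_squared_le:
  assumes fin: "finite (carrier R)" and A: "A \<subseteq> vecs R d"
  defines "\<alpha> \<equiv> real (card A) / real (card (carrier R)) ^ d"
  shows "(\<Sum>p\<in>A \<times> A. \<Sum>z\<in>level_set R d (perp_plane R d p). of_bool (z \<in> A) - \<alpha>)\<^sup>2
    \<le> real (card (orth_triples R d A)) * (real (card (carrier R)) ^ d * real (card A))"
proof -
  let ?K = "vecs R d \<times> carrier R"
  define D where "D k = (\<Sum>z\<in>level_set R d k. of_bool (z \<in> A) - \<alpha>)" for k
  define m where "m k = card {p \<in> A \<times> A. perp_plane R d p = k}" for k
  have finK: "finite ?K"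
    using finite_vecs[OF fin] fin by simp
  have finA: "finite A"
    using finite_subset[OF A finite_vecs[OF fin]] .
  have "perp_plane R d ` (A \<times> A) \<subseteq> ?K"
    using A by (auto simp: perp_plane_def intro!: vdiff_closed vdot_closed)
  then have "(\<Sum>p\<in>A \<times> A. D (perp_plane R d p)) = (\<Sum>k\<in>?K. m k * D k)"
    unfolding m_def using finA finK by (subst sum_comp_eq_sum_card_fibres) auto
  then have "(\<Sum>p\<in>A \<times> A. D (perp_plane R d p))\<^sup>2 \<le> (\<Sum>k\<in>?K. (m k)\<^sup>2) * (\<Sum>k\<in>?K. (D k)\<^sup>2)"
    by (simp add: Cauchy_Schwarz_ineq_sum)
  also have "\<dots> \<le> real (card (orth_triples R d A)) * (real (card (carrier R)) ^ d * real (card A))"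
  proof (rule mult_mono)
    show "(\<Sum>k\<in>?K. (m k)\<^sup>2) \<le> real (card (orth_triples R d A))"
      using sum_card_perp_plane_fibres_squared_le[OF A finA finK] unfolding m_def
      by (simp only: of_nat_power[symmetric] of_nat_sum[symmetric] of_nat_le_iff)
    show "(\<Sum>k\<in>?K. (D k)\<^sup>2) \<le> real (card (carrier R)) ^ d * real (card A)"
      using sum_level_sets_centered_squared_le[OF fin A] unfolding D_def \<alpha>_def .
  qed (auto intro: sum_nonneg)
  finally show ?thesis
    by (simp add: D_def)
qed

lemma card_orth_triples_ge:
  assumes fin: "finite (carrier R)" and A: "A \<subseteq> vecs R d" and d: "d \<ge> 1"
  defines "a \<equiv> real (card A)" and "q \<equiv> real (card (carrier R))"
    and "T \<equiv> real (card (orth_triples R d A))"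
  shows "a ^ 3 / q \<le> T + sqrt (T * (q ^ d * a))"
proof -
  let ?H = "\<lambda>p. level_set R d (perp_plane R d p)"
  define \<alpha> where "\<alpha> = a / q ^ d"
  define E where "E = (\<Sum>p\<in>A \<times> A. \<Sum>z\<in>?H p. of_bool (z \<in> A) - \<alpha>)"
  have finA: "finite A"
    using finite_subset[OF A finite_vecs[OF fin]] .
  have "real (card (A \<inter> ?H p)) = \<alpha> * card (?H p) + (\<Sum>z\<in>?H p. of_bool (z \<in> A) - \<alpha>)" for p
    using finite_subset[OF level_set_subset_vecs finite_vecs[OF fin]]
    by (simp add: sum_subtractf Int_commute Int_def)
  then have T_eq: "T = \<alpha> * (\<Sum>p\<in>A \<times> A. real (card (?H p))) + E"
    unfolding T_def E_def card_orth_triples[OF A finA] by (simp add: sum.distrib sum_distrib_left)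
  have "(\<Sum>p\<in>A \<times> A. q ^ (d - 1)) \<le> (\<Sum>p\<in>A \<times> A. real (card (?H p)))"
    using card_level_set_perp_plane_ge[OF fin] A unfolding q_def
    by (intro sum_mono) (auto simp flip: of_nat_power)
  moreover have "a ^ 3 / q = \<alpha> * (\<Sum>p\<in>A \<times> A. q ^ (d - 1))"
  proof -
    have "q ^ d = q * q ^ (d - 1)"
      using d by (simp flip: power_Suc)
    moreover have "q > 0"
      using fin by (auto simp: q_def card_gt_0_iff)
    ultimately show ?thesis
      by (simp add: \<alpha>_def a_def card_cartesian_product power3_eq_cube)
  qed
  moreover have "0 \<le> \<alpha>"
    by (simp add: \<alpha>_def a_def q_def)
  ultimately have "a ^ 3 / q \<le> \<alpha> * (\<Sum>p\<in>A \<times> A. real (card (?H p)))"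
    by (metis mult_left_mono)
  moreover have "\<bar>E\<bar> \<le> sqrt (T * (q ^ d * a))"
    using sum_perp_plane_discrepancies_squared_le[OF fin A] real_sqrt_le_mono
    unfolding E_def \<alpha>_def T_def a_def q_def by (metis real_sqrt_abs)
  ultimately show ?thesis
    using T_eq by linarith
qed

end

section \<open>The density threshold\<close>

lemma error_terms_lt_main_term:
  fixes a q :: real
  assumes q: "1 \<le> q" and d: "1 \<le> d" and a: "7 * q powr ((real d + 2) / 3) \<le> a"
  shows "3 * a\<^sup>2 + sqrt (3 * a\<^sup>2 * (q ^ d * a)) < a ^ 3 / q"
proof -
  have q_pos: "0 < q"
    using q by simp
  have "q powr 1 \<le> q powr ((real d + 2) / 3)"
    using q d by (intro powr_mono) auto
  then have a_ge: "7 * q \<le> a"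
    using a q by simp
  then have a_pos: "0 < a"
    using q_pos by simp
  have "(q powr ((real d + 2) / 3)) ^ 3 = q powr real (d + 2)"
    using q_pos by (simp add: powr_power add_divide_distrib add.commute)
  also have "\<dots> = q ^ (d + 2)"
    using q_pos by (rule powr_realpow)
  finally have "343 * q ^ (d + 2) \<le> a ^ 3"
    using power_mono[OF a, of 3] q by (simp add: power_mult_distrib)
  then have "147 * q ^ (d + 2) < 16 * a ^ 3"
    using q_pos by (smt (verit) zero_less_power)
  then have "a ^ 3 * (147 * q ^ (d + 2)) < a ^ 3 * (16 * a ^ 3)"
    using a_pos by simp
  then have "3 * a\<^sup>2 * (q ^ d * a) * (49 * q\<^sup>2) < 16 * a ^ 6"
    by (simp add: power_add eval_nat_numeral algebra_simps)
  then have "3 * a\<^sup>2 * (q ^ d * a) < (4 * a ^ 3 / (7 * q))\<^sup>2"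
    using q_pos by (simp add: power_divide power_mult_distrib pos_less_divide_eq)
  then have "sqrt (3 * a\<^sup>2 * (q ^ d * a)) < 4 * a ^ 3 / (7 * q)"
    using a_pos q_pos by (intro real_less_lsqrt) auto
  moreover have "3 * a\<^sup>2 + 4 * a ^ 3 / (7 * q) \<le> a ^ 3 / q"
  proof -
    have "3 * a\<^sup>2 * (7 * q) \<le> 3 * a ^ 3"
      using mult_left_mono[OF a_ge, of "3 * a\<^sup>2"] by (simp add: power2_eq_square power3_eq_cube)
    then have "3 * a\<^sup>2 \<le> 3 * a ^ 3 / (7 * q)"
      using q_pos by (simp add: pos_le_divide_eq)
    moreover have "4 * a ^ 3 / (7 * q) = a ^ 3 / q - 3 * a ^ 3 / (7 * q)"
      using q_pos by (simp add: field_simps)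
    ultimately show ?thesis
      by linarith
  qed
  ultimately show ?thesis
    by linarith
qed

theorem corollary2p3:
  shows "\<exists>C::real. C > 0 \<and>
    (\<forall>(R :: nat ring) (d :: nat) (A :: (nat \<Rightarrow> nat) set).
       field R \<and> finite (carrier R) \<and>
       (\<exists>p k. prime (p::nat) \<and> odd p \<and> k \<ge> 1 \<and> card (carrier R) = p ^ k) \<and>
       d \<ge> 2 \<and> A \<subseteq> vecs R d \<and>
       real (card A) \<ge> C * real (card (carrier R)) powr ((real d + 2) / 3)
       \<longrightarrow> (\<exists>x\<in>A. \<exists>y\<in>A. \<exists>z\<in>A. right_angle R d x y z))"
proof (intro exI[of _ 7] conjI allI impI)
  fix R :: "nat ring" and d :: nat and A :: "(nat \<Rightarrow> nat) set"
  assume "field R \<and> finite (carrier R) \<and>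
       (\<exists>p k. prime (p::nat) \<and> odd p \<and> k \<ge> 1 \<and> card (carrier R) = p ^ k) \<and>
       d \<ge> 2 \<and> A \<subseteq> vecs R d \<and>
       real (card A) \<ge> 7 * real (card (carrier R)) powr ((real d + 2) / 3)"
  then have "field R" and fin: "finite (carrier R)" and d: "1 \<le> d" and A: "A \<subseteq> vecs R d"
    and large: "7 * real (card (carrier R)) powr ((real d + 2) / 3) \<le> real (card A)"
    by auto
  interpret field R by fact
  let ?a = "real (card A)" and ?q = "real (card (carrier R))" and ?T = "real (card (orth_triples R d A))"
  show "\<exists>x\<in>A. \<exists>y\<in>A. \<exists>z\<in>A. right_angle R d x y z"
  proof (rule ccontr)
    assume "\<not> ?thesis"
    then have "card (orth_triples R d A) \<le> 3 * card A ^ 2"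
      using card_orth_triples_le_if_no_right_angle finite_subset[OF A finite_vecs[OF fin]] by blast
    then have "?T \<le> 3 * ?a\<^sup>2"
      by (metis of_nat_le_iff of_nat_mult of_nat_numeral of_nat_power)
    moreover have "sqrt (?T * (?q ^ d * ?a)) \<le> sqrt (3 * ?a\<^sup>2 * (?q ^ d * ?a))"
      using \<open>?T \<le> 3 * ?a\<^sup>2\<close> by (simp add: mult_right_mono)
    ultimately have "?a ^ 3 / ?q \<le> 3 * ?a\<^sup>2 + sqrt (3 * ?a\<^sup>2 * (?q ^ d * ?a))"
      using card_orth_triples_ge[OF fin A d] by linarith
    moreover have "1 \<le> ?q"
      using fin zero_closed by (auto simp: Suc_le_eq card_gt_0_iff)
    ultimately show False
      using error_terms_lt_main_term[OF _ d large] by linarith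
  qed
qed simp

end
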